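(* Let $d\in\mathbb N$, $\alpha>0$, $\varepsilon>0$, and let $\mathcal A=\{a_1,\dots,a_m\}\subseteq(\mathbb Z^d)^*$ be a set of primitive vectors that positively span the linear space they generate (i.e., there are $\lambda_1,\dots,\lambda_m\ge0$, not all $0$, with $\sum\lambda_ia_i=0$). Let $\mathcal N(d,\alpha,\mathcal A)$ be the set of $d$-dimensional lattice polytopes $P$ with $\alpha$-canonical normal fan and $\mathcal N_{\mathrm{core}}(P)=\mathcal A$. Then \[ \{\operatorname{qcd}(P)\mid P\in\mathcal N(d,\alpha,\mathcal A),\ \operatorname{qcd}(P)\ge\varepsilon\} \] is finite.
   Context: A $d$-dimensional lattice polytope is written $P=\{x\in\mathbb R^d\mid \langle a_i,x\rangle\le b_i,\ 1\le i\le n\}$ with an irredundant system and primitive $a_i\in(\mathbb Z^d)^*$. For rational $c>0$, $P^{(c)}=\{x\mid \langle a_i,x\rangle\le b_i-c\ \forall i\}$; $\operatorname{qcd}(P)^{-1}=\max\{c>0\mid P^{(c)}\ne\emptyset\}$; with $c_0=\operatorname{qcd}(P)^{-1}$, $\operatorname{core}P=P^{(c_0)}$, and $\mathcal N_{\mathrm{core}}(P)$ is the set of those $a_i$ with $\langle a_i,y\rangle=b_i-c_0$ for all $y\in\operatorname{core}P$. The normal fan of $P$ is the complete fan whose cones are $\operatorname{cone}(a_i\mid i\in I)$ with $I$ the set of facets containing a given face. For a rational polyhedral cone $\sigma$ with primitive ray generators $a_1,\dots,a_k$, the height of $y\in\sigma$ is $\max\{\sum\lambda_i\mid y=\sum\lambda_ia_i,\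 \lambda_i\ge0\}$; $\sigma$ is $\alpha$-canonical if every nonzero $y\in\sigma\cap(\mathbb Z^d)^*$ has height at least $\alpha$; a fan is $\alpha$-canonical if all its cones are. *)

theory Defs
  imports "HOL-Analysis.Analysis"
begin

text \<open>Vectors of the dual lattice are identified with integer vectors of real^'n
  via the standard inner product; d = CARD('n).\<close>

definition integral_vec :: "real^'n \<Rightarrow> bool" where
  "integral_vec x \<longleftrightarrow> (\<forall>i. x $ i \<in> \<int>)"

definition primitive_vec :: "real^'n \<Rightarrow> bool" where
  "primitive_vec a \<longleftrightarrow> integral_vec a \<and> a \<noteq> 0 \<and>
     (\<forall>(k::int) v. integral_vec v \<and> a = of_int k *\<^sub>R v \<longrightarrow> \<bar>k\<bar> = 1)"

definition lattice_polytope :: "(real^'n) set \<Rightarrow> bool" where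
  "lattice_polytope P \<longleftrightarrow>
     (\<exists>V. finite V \<and> (\<forall>v\<in>V. integral_vec v) \<and> P = convex hull V)
     \<and> aff_dim P = int CARD('n)"

definition supp :: "(real^'n) set \<Rightarrow> real^'n \<Rightarrow> real" where
  "supp P a = Sup ((\<lambda>x. a \<bullet> x) ` P)"

definition normal_face :: "(real^'n) set \<Rightarrow> real^'n \<Rightarrow> (real^'n) set" where
  "normal_face P a = {x\<in>P. a \<bullet> x = supp P a}"

text \<open>The primitive (outer) facet normals a_i of the irredundant description
  P = {x. a_i . x \<le> b_i}; here b_i = supp P a_i.\<close>
definition facet_normals :: "(real^'n) set \<Rightarrow> (real^'n) set" where
  "facet_normals P = {a. primitive_vec a \<and> (\<exists>F. F facet_of P \<and> F = normal_face P a)}"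

definition shrink :: "(real^'n) set \<Rightarrow> real \<Rightarrow> (real^'n) set" where
  "shrink P c = {x. \<forall>a\<in>facet_normals P. a \<bullet> x \<le> supp P a - c}"

definition qcd_inv :: "(real^'n) set \<Rightarrow> real" where
  "qcd_inv P = Sup {c. c \<in> \<rat> \<and> c > 0 \<and> shrink P c \<noteq> {}}"

definition qcd :: "(real^'n) set \<Rightarrow> real" where
  "qcd P = 1 / qcd_inv P"

definition core :: "(real^'n) set \<Rightarrow> (real^'n) set" where
  "core P = shrink P (qcd_inv P)"

definition core_normals :: "(real^'n) set \<Rightarrow> (real^'n) set" where
  "core_normals P = {a\<in>facet_normals P. \<forall>y\<in>core P. a \<bullet> y = supp P a - qcd_inv P}"

definition cone_height :: "(real^'n) set \<Rightarrow> real^'n \<Rightarrow> real" where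
  "cone_height gens y = Sup {(\<Sum>a\<in>gens. l a) | l.
      (\<forall>a\<in>gens. l a \<ge> 0) \<and> y = (\<Sum>a\<in>gens. l a *\<^sub>R a)}"

definition alpha_canonical_cone :: "real \<Rightarrow> (real^'n) set \<Rightarrow> bool" where
  "alpha_canonical_cone \<alpha> gens \<longleftrightarrow>
     (\<forall>y. integral_vec y \<and> y \<noteq> 0 \<and>
        (\<exists>l. (\<forall>a\<in>gens. l a \<ge> 0) \<and> y = (\<Sum>a\<in>gens. l a *\<^sub>R a))
        \<longrightarrow> cone_height gens y \<ge> \<alpha>)"

definition normal_fan_cone_gens :: "(real^'n) set \<Rightarrow> (real^'n) set \<Rightarrow> (real^'n) set" where
  "normal_fan_cone_gens P G = {a\<in>facet_normals P. G \<subseteq> normal_face P a}"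

definition alpha_canonical_normal_fan :: "real \<Rightarrow> (real^'n) set \<Rightarrow> bool" where
  "alpha_canonical_normal_fan \<alpha> P \<longleftrightarrow>
     (\<forall>G. G face_of P \<and> G \<noteq> {} \<longrightarrow> alpha_canonical_cone \<alpha> (normal_fan_cone_gens P G))"

definition NN :: "real \<Rightarrow> (real^'n) set \<Rightarrow> (real^'n) set set" where
  "NN \<alpha> A = {P. lattice_polytope P \<and> alpha_canonical_normal_fan \<alpha> P \<and> core_normals P = A}"

end

theory Submission
  imports Defs
begin

text \<open>Let y be a point of the core of P. Every core normal a satisfies a \<bullet> y = b a - c with
  c = qcd(P)\<inverse> and b a = supp P a an integer. Pairing y with a nonnegative relation among the
  core normals, which may be chosen rational, exhibits c as an integer combination of the b a with
  fixed rational coefficients, so N c \<in> \<int> for some N depending only on A. As qcd P \<ge> \<epsilon>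
  bounds c by 1/\<epsilon>, only finitely many values remain. The core is nonempty because, by Farkas'
  lemma, infeasibility of the shifted facet inequalities at c would persist for slightly smaller
  admissible shifts.\<close>

subsection \<open>Rational relations\<close>

lemma relation_eliminate_coordinate:
  fixes v :: "'i \<Rightarrow> real^'n"
  assumes "finite I" and "i \<in> I" and "v i $ j \<noteq> 0"
    and r_def: "\<And>k. r k = v k $ j / v i $ j" and w_def: "\<And>k. w k = v k - r k *\<^sub>R v i"
  shows "(\<Sum>k\<in>I. l k *\<^sub>R v k) = 0 \<longleftrightarrow>
           l i = - (\<Sum>k\<in>I - {i}. l k * r k) \<and> (\<Sum>k\<in>I - {i}. l k *\<^sub>R w k) = 0"
proof -
  have "(\<Sum>k\<in>I. l k *\<^sub>R v k) = l i *\<^sub>R v i + (\<Sum>k\<in>I - {i}. l k *\<^sub>R v k)"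
    using sum.remove[OF assms(1,2)] by simp
  also have "(\<Sum>k\<in>I - {i}. l k *\<^sub>R v k)
      = (\<Sum>k\<in>I - {i}. l k *\<^sub>R w k) + (\<Sum>k\<in>I - {i}. l k * r k) *\<^sub>R v i"
    by (simp add: w_def scaleR_diff_right sum_subtractf scaleR_sum_left)
  finally have split: "(\<Sum>k\<in>I. l k *\<^sub>R v k)
      = (l i + (\<Sum>k\<in>I - {i}. l k * r k)) *\<^sub>R v i + (\<Sum>k\<in>I - {i}. l k *\<^sub>R w k)"
    by (simp add: scaleR_add_left algebra_simps)
  have "w k $ j = 0" for k
    using assms(3) by (simp add: w_def r_def)
  then have "(\<Sum>k\<in>I - {i}. l k *\<^sub>R w k) $ j = 0"
    by simp
  then have coord: "(\<Sum>k\<in>I. l k *\<^sub>R v k) $ j = (l i + (\<Sum>k\<in>I - {i}. l k * r k)) * v i $ j"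
    by (simp only: split vector_add_component vector_scaleR_component) simp
  show ?thesis
  proof
    assume rel: "(\<Sum>k\<in>I. l k *\<^sub>R v k) = 0"
    then have "l i + (\<Sum>k\<in>I - {i}. l k * r k) = 0"
      using coord assms(3) by simp
    then show "l i = - (\<Sum>k\<in>I - {i}. l k * r k) \<and> (\<Sum>k\<in>I - {i}. l k *\<^sub>R w k) = 0"
      using rel split by (simp add: eq_neg_iff_add_eq_0)
  qed (use split in simp)
qed

text \<open>Gaussian elimination: eliminate one coordinate by a vector with nonzero entry there,
  approximate a relation among the remaining (still rational) vectors, and solve for the
  eliminated coefficient, which is then a rational combination of the other coefficients.\<close>
lemma rational_relation_approx:
  fixes v :: "'i \<Rightarrow> real^'n"
  assumes "finite I" and "\<forall>i\<in>I. \<forall>j. v i $ j \<in> \<rat>" and "(\<Sum>i\<in>I. l i *\<^sub>R v i) = 0" and "\<delta> > 0"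
  shows "\<exists>l'. (\<forall>i\<in>I. l' i \<in> \<rat> \<and> \<bar>l' i - l i\<bar> < \<delta>) \<and> (\<Sum>i\<in>I. l' i *\<^sub>R v i) = 0"
  using assms
proof (induction "card I" arbitrary: I v l \<delta> rule: less_induct)
  case less
  show ?case
  proof (cases "\<forall>i\<in>I. v i = 0")
    case True
    have "\<exists>q. q \<in> \<rat> \<and> l i - \<delta> < q \<and> q < l i" for i
      using Rats_dense_in_real[of "l i - \<delta>" "l i"] less.prems(4) by auto
    then obtain l' where l': "\<And>i. l' i \<in> \<rat> \<and> l i - \<delta> < l' i \<and> l' i < l i"
      by metis
    have "l' i \<in> \<rat> \<and> \<bar>l' i - l i\<bar> < \<delta>" for i
      using l'[of i] less.prems(4) by (auto simp: abs_less_iff)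
    then show ?thesis
      using True by auto
  next
    case False
    then obtain i j where i: "i \<in> I" and vij: "v i $ j \<noteq> 0"
      by (metis vec_eq_iff zero_index)
    define I' where "I' = I - {i}"
    define r where "r k = v k $ j / v i $ j" for k
    define w where "w k = v k - r k *\<^sub>R v i" for k
    note elim = relation_eliminate_coordinate[where r = r and w = w, OF less.prems(1) i vij r_def w_def,
      folded I'_def]
    have r_Rats: "r k \<in> \<rat>" if "k \<in> I" for k
      using less.prems(2) that i by (simp add: r_def)
    have w_Rats: "\<forall>k\<in>I'. \<forall>j. w k $ j \<in> \<rat>"
      using less.prems(2) r_Rats i by (auto simp: w_def I'_def)
    have l_i: "l i = - (\<Sum>k\<in>I'. l k * r k)" and w_rel: "(\<Sum>k\<in>I'. l k *\<^sub>R w k) = 0"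
      using elim less.prems(3) by auto
    define R where "R = (\<Sum>k\<in>I'. \<bar>r k\<bar>)"
    have "R \<ge> 0"
      by (simp add: R_def sum_nonneg)
    define \<delta>' where "\<delta>' = \<delta> / (1 + R)"
    have "\<delta>' > 0" and "\<delta>' \<le> \<delta>" and "\<delta>' * R < \<delta>"
      using \<open>R \<ge> 0\<close> less.prems(4) by (auto simp: \<delta>'_def field_simps)
    have "card I' < card I"
      unfolding I'_def using less.prems(1) i by (rule card_Diff1_less)
    then obtain l' where l': "\<forall>k\<in>I'. l' k \<in> \<rat> \<and> \<bar>l' k - l k\<bar> < \<delta>'"
      and l'_rel: "(\<Sum>k\<in>I'. l' k *\<^sub>R w k) = 0"
      using less.hyps less.prems(1) w_Rats w_rel \<open>\<delta>' > 0\<close> unfolding I'_def by blast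
    define l'' where "l'' = l'(i := - (\<Sum>k\<in>I'. l' k * r k))"
    have l''_eq: "(\<Sum>k\<in>I'. l'' k * g k) = (\<Sum>k\<in>I'. l' k * g k)" for g
      by (rule sum.cong) (auto simp: l''_def I'_def)
    have l''_eq': "(\<Sum>k\<in>I'. l'' k *\<^sub>R w k) = (\<Sum>k\<in>I'. l' k *\<^sub>R w k)"
      by (rule sum.cong) (auto simp: l''_def I'_def)
    have "\<bar>l'' i - l i\<bar> = \<bar>\<Sum>k\<in>I'. (l k - l' k) * r k\<bar>"
      by (simp add: l''_def l_i left_diff_distrib sum_subtractf)
    also have "\<dots> \<le> (\<Sum>k\<in>I'. \<delta>' * \<bar>r k\<bar>)"
      by (rule order.trans[OF sum_abs sum_mono])
        (use l' in \<open>auto simp: abs_mult abs_minus_commute intro!: mult_right_mono\<close>)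
    also have "\<dots> < \<delta>"
      using \<open>\<delta>' * R < \<delta>\<close> by (simp add: R_def sum_distrib_left)
    finally have "\<bar>l'' i - l i\<bar> < \<delta>" .
    moreover have "l'' i \<in> \<rat>"
      using l' r_Rats by (auto simp: l''_def I'_def intro!: Rats_sum Rats_mult)
    moreover have "(\<Sum>k\<in>I. l'' k *\<^sub>R v k) = 0"
      using elim l''_eq l''_eq' l'_rel by (simp add: l''_def)
    moreover have "l'' k \<in> \<rat> \<and> \<bar>l'' k - l k\<bar> < \<delta>" if "k \<in> I'" for k
      using l' \<open>\<delta>' \<le> \<delta>\<close> that by (fastforce simp: l''_def I'_def)
    ultimately show ?thesis
      by (intro exI[of _ l'']) (auto simp: I'_def)
  qed
qed

text \<open>Approximating the coefficients on the support of l to within their minimum keeps them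
  positive.\<close>
lemma rational_nonneg_relation:
  fixes A :: "(real^'n) set"
  assumes "finite A" and "\<forall>a\<in>A. \<forall>j. a $ j \<in> \<rat>"
    and "\<forall>a\<in>A. l a \<ge> 0" and "\<exists>a\<in>A. l a \<noteq> 0" and "(\<Sum>a\<in>A. l a *\<^sub>R a) = 0"
  shows "\<exists>\<mu>. (\<forall>a\<in>A. \<mu> a \<in> \<rat> \<and> \<mu> a \<ge> 0) \<and> (\<exists>a\<in>A. \<mu> a > 0) \<and> (\<Sum>a\<in>A. \<mu> a *\<^sub>R a) = 0"
proof -
  define I where "I = {a\<in>A. l a > 0}"
  have "finite I" and "I \<noteq> {}"
    using assms(1,3,4) by (force simp: I_def)+
  have "(\<Sum>a\<in>I. l a *\<^sub>R a) = (\<Sum>a\<in>A. l a *\<^sub>R a)"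
    by (rule sum.mono_neutral_left) (use assms(1,3) in \<open>auto simp: I_def\<close>)
  then have rel: "(\<Sum>a\<in>I. l a *\<^sub>R id a) = 0"
    using assms(5) by simp
  define \<delta> where "\<delta> = Min (l ` I)"
  have "\<delta> > 0"
    using \<open>finite I\<close> \<open>I \<noteq> {}\<close> by (auto simp: \<delta>_def I_def)
  have "\<forall>i\<in>I. \<forall>j. id i $ j \<in> \<rat>"
    using assms(2) by (auto simp: I_def)
  then obtain l' where l': "\<forall>i\<in>I. l' i \<in> \<rat> \<and> \<bar>l' i - l i\<bar> < \<delta>"
    and rel': "(\<Sum>i\<in>I. l' i *\<^sub>R id i) = 0"
    using rational_relation_approx[OF \<open>finite I\<close> _ rel \<open>\<delta> > 0\<close>] by blast
  have pos: "l' a > 0" if "a \<in> I" for a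
  proof -
    have "\<delta> \<le> l a"
      using \<open>finite I\<close> that by (simp add: \<delta>_def)
    then show ?thesis
      using l' that by fastforce
  qed
  define \<mu> where "\<mu> a = (if a \<in> I then l' a else 0)" for a
  have "(\<Sum>a\<in>A. \<mu> a *\<^sub>R a) = (\<Sum>a\<in>I. l' a *\<^sub>R a)"
    by (rule sum.mono_neutral_cong_right) (use assms(1) in \<open>auto simp: I_def \<mu>_def\<close>)
  then have "(\<Sum>a\<in>A. \<mu> a *\<^sub>R a) = 0"
    using rel' by simp
  moreover have "\<forall>a\<in>A. \<mu> a \<in> \<rat> \<and> \<mu> a \<ge> 0"
    using l' pos by (auto simp: \<mu>_def less_imp_le)
  moreover have "\<exists>a\<in>A. \<mu> a > 0"
    using \<open>I \<noteq> {}\<close> pos by (auto simp: \<mu>_def I_def)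
  ultimately show ?thesis
    by blast
qed

lemma Rats_common_denominator:
  assumes "finite A" and "\<forall>a\<in>A. f a \<in> \<rat>"
  shows "\<exists>D::int. D > 0 \<and> (\<forall>a\<in>A. of_int D * f a \<in> \<int>)"
  using assms
proof (induction A rule: finite_induct)
  case (insert x A)
  then obtain D :: int where D: "D > 0" "\<forall>a\<in>A. of_int D * f a \<in> \<int>"
    by auto
  obtain p q :: int where "q > 0" and "f x = of_int p / of_int q"
    using insert.prems Rats_cases' by (metis insert_iff)
  then have "of_int (D * q) * f x \<in> \<int>"
    by simp
  moreover have "of_int (D * q) * f a \<in> \<int>" if "a \<in> A" for a
    using D(2) that by (metis Ints_mult Ints_of_int mult.commute mult.left_commute of_int_mult)
  ultimately show ?case
    using D(1) \<open>q > 0\<close> by (intro exI[of _ "D * q"]) auto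
qed (auto intro: exI[of _ 1])

lemma rational_relation_denominator_bound:
  fixes A :: "'a::real_inner set"
  assumes "finite A" and "\<forall>a\<in>A. \<mu> a \<in> \<rat> \<and> \<mu> a \<ge> 0" and "\<exists>a\<in>A. \<mu> a > 0"
    and "(\<Sum>a\<in>A. \<mu> a *\<^sub>R a) = 0"
  obtains N :: real where "N > 0"
    and "\<And>c y b. \<forall>a\<in>A. b a \<in> \<int> \<and> a \<bullet> y = b a - c \<Longrightarrow> N * c \<in> \<int>"
proof -
  obtain D :: int where "D > 0" and D: "\<forall>a\<in>A. of_int D * \<mu> a \<in> \<int>"
    using Rats_common_denominator[OF assms(1)] assms(2) by blast
  define S where "S = (\<Sum>a\<in>A. \<mu> a)"
  have "S > 0"
    unfolding S_def using assms(1,2,3) by (metis sum_pos2)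
  have "of_int D * S * c \<in> \<int>" if h: "\<forall>a\<in>A. b a \<in> \<int> \<and> a \<bullet> y = b a - c" for c y b
  proof -
    have "0 = (\<Sum>a\<in>A. \<mu> a *\<^sub>R a) \<bullet> y"
      using assms(4) by simp
    also have "\<dots> = (\<Sum>a\<in>A. \<mu> a * b a) - c * S"
      using h by (simp add: inner_sum_left S_def right_diff_distrib sum_subtractf
          sum_distrib_left mult.commute)
    finally have "S * c = (\<Sum>a\<in>A. \<mu> a * b a)"
      by simp
    then have "of_int D * S * c = (\<Sum>a\<in>A. (of_int D * \<mu> a) * b a)"
      by (simp add: sum_distrib_left mult.assoc)
    also have "\<dots> \<in> \<int>"
      using D h by (intro Ints_sum) (metis Ints_mult)
    finally show ?thesis .
  qed
  then show ?thesis
    using that[of "of_int D * S"] \<open>D > 0\<close> \<open>S > 0\<close> by simp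
qed

subsection \<open>Support functions and facet normals of lattice polytopes\<close>

lemma integral_vec_inner_Ints:
  assumes "integral_vec a" and "integral_vec v"
  shows "a \<bullet> v \<in> \<int>"
  using assms unfolding integral_vec_def inner_vec_def by (auto intro!: Ints_sum Ints_mult)

lemma lattice_polytope_polytope: "lattice_polytope P \<Longrightarrow> polytope P"
  unfolding lattice_polytope_def polytope_def by blast

lemma lattice_polytope_nonempty:
  assumes "lattice_polytope P"
  shows "P \<noteq> {}"
proof
  assume "P = {}"
  then have "aff_dim P = -1"
    by simp
  then show False
    using assms unfolding lattice_polytope_def by simp
qed

lemma inner_le_supp:
  assumes "bounded P" and "x \<in> P"
  shows "a \<bullet> x \<le> supp P a"
proof -
  have "bounded ((\<lambda>x. a \<bullet> x) ` P)"
    using bounded_linear_image[OF assms(1) bounded_linear_inner_right] .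
  then have "bdd_above ((\<lambda>x. a \<bullet> x) ` P)"
    by (rule bounded_imp_bdd_above)
  then show ?thesis
    unfolding supp_def using assms(2) by (intro cSup_upper) auto
qed

lemma supp_convex_hull_finite:
  fixes V :: "(real^'n) set"
  assumes "finite V" and "V \<noteq> {}"
  shows "supp (convex hull V) a = Max ((\<lambda>v. a \<bullet> v) ` V)"
  unfolding supp_def
proof (rule cSup_eq_maximum)
  have "Max ((\<lambda>v. a \<bullet> v) ` V) \<in> (\<lambda>v. a \<bullet> v) ` V"
    using assms by (intro Max_in) auto
  then show "Max ((\<lambda>v. a \<bullet> v) ` V) \<in> (\<lambda>x. a \<bullet> x) ` (convex hull V)"
    using hull_subset[of V convex] by blast
  have "convex hull V \<subseteq> {x. a \<bullet> x \<le> Max ((\<lambda>v. a \<bullet> v) ` V)}"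
    by (rule hull_minimal) (simp_all add: assms(1) convex_halfspace_le subset_iff)
  then show "\<And>t. t \<in> (\<lambda>x. a \<bullet> x) ` (convex hull V) \<Longrightarrow> t \<le> Max ((\<lambda>v. a \<bullet> v) ` V)"
    by auto
qed

lemma supp_lattice_polytope_Ints:
  assumes "lattice_polytope P" and "integral_vec a"
  shows "supp P a \<in> \<int>"
proof -
  obtain V where V: "finite V" "\<forall>v\<in>V. integral_vec v" "P = convex hull V"
    using assms(1) unfolding lattice_polytope_def by blast
  then have "V \<noteq> {}"
    using lattice_polytope_nonempty[OF assms(1)] by auto
  then have "Max ((\<lambda>v. a \<bullet> v) ` V) \<in> (\<lambda>v. a \<bullet> v) ` V"
    using V(1) by (intro Max_in) auto
  moreover have "supp P a = Max ((\<lambda>v. a \<bullet> v) ` V)"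
    using supp_convex_hull_finite[OF V(1) \<open>V \<noteq> {}\<close>] V(3) by simp
  ultimately obtain v where "v \<in> V" and "supp P a = a \<bullet> v"
    by auto
  then show ?thesis
    using V(2) assms(2) by (simp add: integral_vec_inner_Ints)
qed

lemma hyperplane_eq_imp_parallel:
  fixes a a' :: "'a::euclidean_space"
  assumes "a \<noteq> 0" and "{x. a \<bullet> x = s} = {x. a' \<bullet> x = s'}"
  shows "a' = ((a' \<bullet> a) / (a \<bullet> a)) *\<^sub>R a"
proof -
  obtain x0 where x0: "a \<bullet> x0 = s"
    using hyperplane_eq_Ex[OF assms(1)] by blast
  define w where "w = a' - ((a' \<bullet> a) / (a \<bullet> a)) *\<^sub>R a"
  have "w \<bullet> a = 0"
    using assms(1) by (simp add: w_def inner_diff_left)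
  then have "a \<bullet> (x0 + w) = s"
    using x0 by (simp add: inner_add_right inner_commute)
  then have "a' \<bullet> (x0 + w) = s'" and "a' \<bullet> x0 = s'"
    using x0 assms(2) by blast+
  then have "a' \<bullet> w = 0"
    by (simp add: inner_add_right)
  then have "w \<bullet> w = 0"
    using \<open>w \<bullet> a = 0\<close> by (simp add: w_def inner_diff_left inner_commute)
  then show ?thesis
    by (simp add: w_def)
qed

lemma integral_vec_obtain_int:
  fixes a :: "real^'n"
  assumes "integral_vec a"
  obtains z :: "'n \<Rightarrow> int" where "\<And>j. a $ j = of_int (z j)"
proof
  show "a $ j = of_int \<lfloor>a $ j\<rfloor>" for j
    using assms unfolding integral_vec_def by (metis Ints_cases floor_of_int)
qed

lemma primitive_vec_pos_multiple_eq:
  fixes a b :: "real^'n"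
  assumes "primitive_vec a" and "primitive_vec b" and "b = t *\<^sub>R a" and "t > 0"
  shows "b = a"
proof -
  have ia: "integral_vec a" and ib: "integral_vec b" and "a \<noteq> 0"
    using assms(1,2) unfolding primitive_vec_def by auto
  then obtain i where ai: "a $ i \<noteq> 0"
    by (metis vec_eq_iff zero_index)
  have "t = b $ i / a $ i"
    using assms(3) ai by simp
  then have "t \<in> \<rat>"
    using ia ib unfolding integral_vec_def by (metis Ints_subset_Rats Rats_divide subsetD)
  then obtain p q :: int where "q > 0" and "coprime p q" and t: "t = of_int p / of_int q"
    by (rule Rats_cases')
  obtain za zb where za: "\<And>j. a $ j = of_int (za j)" and zb: "\<And>j. b $ j = of_int (zb j)"
    using integral_vec_obtain_int[OF ia] integral_vec_obtain_int[OF ib] by metis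
  have "q dvd za j" for j
  proof -
    have "of_int q * b $ j = of_int p * a $ j"
      using assms(3) t \<open>q > 0\<close> by (simp add: field_simps)
    then have "q * zb j = p * za j"
      using za zb by (metis of_int_eq_iff of_int_mult)
    then have "q dvd p * za j"
      by (metis dvd_triv_left)
    then show ?thesis
      using \<open>coprime p q\<close> by (simp add: coprime_dvd_mult_right_iff coprime_commute)
  qed
  define v where "v = (\<chi> j. real_of_int (za j div q))"
  have "a = of_int q *\<^sub>R v"
    unfolding vec_eq_iff v_def using \<open>\<And>j. q dvd za j\<close> za
    by (auto simp: dvd_div_mult_self) (metis dvd_mult_div_cancel of_int_mult)
  moreover have "integral_vec v"
    unfolding integral_vec_def v_def by simp
  ultimately have "\<bar>q\<bar> = 1"
    using assms(1) unfolding primitive_vec_def by blast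
  then have "q = 1"
    using \<open>q > 0\<close> by simp
  then have "b = of_int p *\<^sub>R a"
    using assms(3) t by simp
  then have "\<bar>p\<bar> = 1"
    using assms(2) ia unfolding primitive_vec_def by blast
  then have "t = 1"
    using t \<open>q = 1\<close> assms(4) by auto
  then show ?thesis
    using assms(3) by simp
qed

lemma affine_hull_facet_normal_face:
  fixes P :: "(real^'n) set"
  assumes "aff_dim P = int CARD('n)" and "a \<noteq> 0" and "normal_face P a facet_of P"
  shows "affine hull (normal_face P a) = {x. a \<bullet> x = supp P a}"
proof (rule affine_dim_equal)
  show "affine hull normal_face P a \<subseteq> {x. a \<bullet> x = supp P a}"
    by (rule hull_minimal) (auto simp: normal_face_def affine_hyperplane)
  show "aff_dim (affine hull normal_face P a) = aff_dim {x. a \<bullet> x = supp P a}"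
    using assms unfolding facet_of_def by simp
  show "affine hull normal_face P a \<noteq> {}"
    using assms(3) unfolding facet_of_def by simp
qed (simp_all add: affine_hyperplane)

text \<open>Two facet normals with the same facet span the same hyperplane, so they are positively
  proportional primitive vectors.\<close>
lemma facet_normals_inj:
  fixes P :: "(real^'n) set"
  assumes P: "lattice_polytope P" and "a \<in> facet_normals P" and "a' \<in> facet_normals P"
    and eq: "normal_face P a = normal_face P a'"
  shows "a = a'"
proof -
  have pa: "primitive_vec a" and pa': "primitive_vec a'" and facet: "normal_face P a facet_of P"
    using assms(2,3) unfolding facet_normals_def by auto
  then have "a \<noteq> 0" and "a' \<noteq> 0"
    unfolding primitive_vec_def by auto
  have dim: "aff_dim P = int CARD('n)"
    using P unfolding lattice_polytope_def by auto
  have "{x. a \<bullet> x = supp P a} = {x. a' \<bullet> x = supp P a'}"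
    using affine_hull_facet_normal_face[OF dim \<open>a \<noteq> 0\<close> facet]
      affine_hull_facet_normal_face[OF dim \<open>a' \<noteq> 0\<close>] facet eq by simp
  then obtain t where a': "a' = t *\<^sub>R a"
    using hyperplane_eq_imp_parallel[OF \<open>a \<noteq> 0\<close>] by blast
  obtain g where "g \<in> normal_face P a"
    using facet unfolding facet_of_def by blast
  then have "a \<bullet> g = supp P a" and "a' \<bullet> g = supp P a'"
    using eq unfolding normal_face_def by auto
  then have supp': "supp P a' = t * supp P a"
    using a' by simp
  have "\<not> P \<subseteq> {x. a \<bullet> x = supp P a}"
    using aff_dim_subset[of P "{x. a \<bullet> x = supp P a}"] dim \<open>a \<noteq> 0\<close> by auto
  then obtain x where "x \<in> P" and "a \<bullet> x \<noteq> supp P a"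
    by blast
  moreover have "bounded P"
    using P lattice_polytope_polytope polytope_imp_bounded by blast
  ultimately have "a \<bullet> x < supp P a" and "t * (a \<bullet> x) \<le> t * supp P a"
    using inner_le_supp[of P x a] inner_le_supp[of P x a'] a' supp' by auto
  moreover have "t \<noteq> 0"
    using a' \<open>a' \<noteq> 0\<close> by auto
  ultimately have "t > 0"
    using mult_less_cancel_left_neg[of t "a \<bullet> x" "supp P a"] by fastforce
  then show ?thesis
    using primitive_vec_pos_multiple_eq[OF pa pa' a'] by simp
qed

lemma finite_facet_normals:
  assumes "lattice_polytope P"
  shows "finite (facet_normals P)"
proof (rule finite_imageD)
  have "normal_face P ` facet_normals P \<subseteq> {F. F facet_of P}"
    unfolding facet_normals_def by auto
  then show "finite (normal_face P ` facet_normals P)"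
    using finite_polytope_facets[OF lattice_polytope_polytope[OF assms]] finite_subset by blast
  show "inj_on (normal_face P) (facet_normals P)"
    using facet_normals_inj[OF assms] by (auto simp: inj_on_def)
qed

subsection \<open>Farkas' lemma and nonemptiness of the core\<close>

lemma convex_cone_nonneg_combinations:
  "convex_cone {\<Sum>a\<in>F. \<nu> a *\<^sub>R g a | \<nu>. \<forall>a\<in>F. \<nu> a \<ge> (0::real)}"
  unfolding convex_cone_iff
proof (intro conjI ballI allI impI)
  show "0 \<in> {\<Sum>a\<in>F. \<nu> a *\<^sub>R g a | \<nu>. \<forall>a\<in>F. \<nu> a \<ge> 0}"
    by (auto intro!: exI[of _ "\<lambda>_. 0"])
next
  fix x y assume "x \<in> {\<Sum>a\<in>F. \<nu> a *\<^sub>R g a | \<nu>. \<forall>a\<in>F. \<nu> a \<ge> 0}"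
    and "y \<in> {\<Sum>a\<in>F. \<nu> a *\<^sub>R g a | \<nu>. \<forall>a\<in>F. \<nu> a \<ge> 0}"
  then obtain \<nu> \<nu>' where "\<forall>a\<in>F. \<nu> a \<ge> 0" "x = (\<Sum>a\<in>F. \<nu> a *\<^sub>R g a)"
    and "\<forall>a\<in>F. \<nu>' a \<ge> 0" "y = (\<Sum>a\<in>F. \<nu>' a *\<^sub>R g a)"
    by blast
  then show "x + y \<in> {\<Sum>a\<in>F. \<nu> a *\<^sub>R g a | \<nu>. \<forall>a\<in>F. \<nu> a \<ge> 0}"
    by (intro CollectI exI[of _ "\<lambda>a. \<nu> a + \<nu>' a"]) (simp add: scaleR_add_left sum.distrib)
next
  fix x and c :: real
  assume "x \<in> {\<Sum>a\<in>F. \<nu> a *\<^sub>R g a | \<nu>. \<forall>a\<in>F. \<nu> a \<ge> 0}" and "0 \<le> c"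
  then obtain \<nu> where "\<forall>a\<in>F. \<nu> a \<ge> 0" "x = (\<Sum>a\<in>F. \<nu> a *\<^sub>R g a)"
    by blast
  then show "c *\<^sub>R x \<in> {\<Sum>a\<in>F. \<nu> a *\<^sub>R g a | \<nu>. \<forall>a\<in>F. \<nu> a \<ge> 0}"
    using \<open>0 \<le> c\<close> by (intro CollectI exI[of _ "\<lambda>a. c * \<nu> a"]) (simp add: scaleR_sum_right)
qed

lemma convex_cone_hull_subset_nonneg_combinations:
  assumes "finite F"
  shows "convex_cone hull (g ` F) \<subseteq> {\<Sum>a\<in>F. \<nu> a *\<^sub>R g a | \<nu>. \<forall>a\<in>F. \<nu> a \<ge> (0::real)}"
proof (rule hull_minimal)
  show "convex_cone {\<Sum>a\<in>F. \<nu> a *\<^sub>R g a | \<nu>. \<forall>a\<in>F. \<nu> a \<ge> 0}"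
    by (rule convex_cone_nonneg_combinations)
  show "g ` F \<subseteq> {\<Sum>a\<in>F. \<nu> a *\<^sub>R g a | \<nu>. \<forall>a\<in>F. \<nu> a \<ge> 0}"
  proof
    fix x assume "x \<in> g ` F"
    then obtain b where "b \<in> F" and "x = g b"
      by blast
    have "(\<Sum>a\<in>F. (if a = b then 1 else 0) *\<^sub>R g a) = (\<Sum>a\<in>F. if a = b then g a else 0)"
      by (intro sum.cong) auto
    also have "\<dots> = x"
      using assms \<open>b \<in> F\<close> \<open>x = g b\<close> by simp
    finally show "x \<in> {\<Sum>a\<in>F. \<nu> a *\<^sub>R g a | \<nu>. \<forall>a\<in>F. \<nu> a \<ge> 0}"
      by (intro CollectI exI[of _ "\<lambda>a. if a = b then 1 else 0"]) simp
  qed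
qed

lemma separating_hyperplane_closed_convex_cone:
  fixes z :: "'a::euclidean_space"
  assumes "convex_cone C" and "closed C" and "z \<notin> C"
  obtains w where "w \<bullet> z < 0" and "\<And>x. x \<in> C \<Longrightarrow> w \<bullet> x \<ge> 0"
proof -
  obtain w b where wz: "w \<bullet> z < b" and wC: "\<forall>x\<in>C. w \<bullet> x > b"
    using separating_hyperplane_closed_point assms convex_cone_def by metis
  have "b < 0"
    using wC convex_cone_contains_0[OF assms(1)] by fastforce
  have nonneg: "w \<bullet> x \<ge> 0" if "x \<in> C" for x
  proof (rule ccontr)
    assume "\<not> w \<bullet> x \<ge> 0"
    then have "b / (w \<bullet> x) \<ge> 0"
      using \<open>b < 0\<close> by (simp add: divide_nonpos_neg)
    then have "(b / (w \<bullet> x)) *\<^sub>R x \<in> C"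
      using assms(1) that by (simp add: convex_cone_iff)
    moreover have "w \<bullet> ((b / (w \<bullet> x)) *\<^sub>R x) = b"
      using \<open>\<not> w \<bullet> x \<ge> 0\<close> by simp
    ultimately show False
      using wC by fastforce
  qed
  show ?thesis
    by (rule that[of w]) (use wz \<open>b < 0\<close> nonneg in auto)
qed

text \<open>If (0, -1) were not a nonnegative combination of the vectors (a, \<beta> a), a hyperplane
  (u, s) separating it from their cone would give the feasible point -u/s.\<close>
lemma farkas_infeasible:
  fixes F :: "'a::euclidean_space set" and \<beta> :: "'a \<Rightarrow> real"
  assumes "finite F" and infeasible: "{y. \<forall>a\<in>F. a \<bullet> y \<le> \<beta> a} = {}"
  shows "\<exists>\<nu>. (\<forall>a\<in>F. \<nu> a \<ge> 0) \<and> (\<Sum>a\<in>F. \<nu> a *\<^sub>R a) = 0 \<and> (\<Sum>a\<in>F. \<nu> a * \<beta> a) = -1"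
proof -
  define C where "C = convex_cone hull ((\<lambda>a. (a, \<beta> a)) ` F)"
  have "(0, -1) \<in> C"
  proof (rule ccontr)
    assume notin: "(0, -1) \<notin> C"
    have "convex_cone C"
      unfolding C_def by (rule convex_cone_convex_cone_hull)
    moreover have "closed C"
      unfolding C_def using assms(1) by (simp add: closed_convex_cone_hull)
    ultimately obtain w where w: "w \<bullet> (0, -1) < 0" and sep: "\<And>x. x \<in> C \<Longrightarrow> w \<bullet> x \<ge> 0"
      using separating_hyperplane_closed_convex_cone notin by blast
    obtain u s where us: "w = (u, s)"
      by (cases w)
    then have "s > 0"
      using w by (simp add: inner_Pair)
    have "a \<bullet> (- (1 / s) *\<^sub>R u) \<le> \<beta> a" if "a \<in> F" for a
    proof -
      have "(a, \<beta> a) \<in> C"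
        unfolding C_def using that by (intro hull_inc) simp
      then have "0 \<le> u \<bullet> a + \<beta> a * s"
        using sep[of "(a, \<beta> a)"] us by (simp add: inner_Pair mult.commute)
      then have "- (a \<bullet> u) \<le> \<beta> a * s"
        by (simp add: inner_commute)
      then show ?thesis
        using \<open>s > 0\<close> by (simp add: field_simps)
    qed
    then show False
      using infeasible by blast
  qed
  then obtain \<nu> where "\<forall>a\<in>F. \<nu> a \<ge> 0" and "(0, -1) = (\<Sum>a\<in>F. \<nu> a *\<^sub>R (a, \<beta> a))"
    using convex_cone_hull_subset_nonneg_combinations[OF assms(1)] unfolding C_def by blast
  then show ?thesis
    by (intro exI[of _ \<nu>]) (simp add: fst_sum snd_sum prod_eq_iff)
qed

text \<open>A Farkas certificate for the shift c0 also certifies infeasibility for all shifts that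
  are smaller by less than the reciprocal of one plus its total weight.\<close>
lemma infeasible_shift_open:
  fixes F :: "'a::euclidean_space set"
  assumes "finite F" and "{y. \<forall>a\<in>F. a \<bullet> y \<le> \<beta> a - c0} = {}"
  obtains \<delta> :: real where "\<delta> > 0" and "\<And>c. c > c0 - \<delta> \<Longrightarrow> {y. \<forall>a\<in>F. a \<bullet> y \<le> \<beta> a - c} = {}"
proof -
  obtain \<nu> where \<nu>: "\<forall>a\<in>F. \<nu> a \<ge> 0" "(\<Sum>a\<in>F. \<nu> a *\<^sub>R a) = 0"
    and cert: "(\<Sum>a\<in>F. \<nu> a * (\<beta> a - c0)) = -1"
    using farkas_infeasible[OF assms] by blast
  define T where "T = (\<Sum>a\<in>F. \<nu> a)"
  have "T \<ge> 0"
    unfolding T_def using \<nu>(1) by (simp add: sum_nonneg)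
  have "{y. \<forall>a\<in>F. a \<bullet> y \<le> \<beta> a - c} = {}" if "c > c0 - 1 / (1 + T)" for c
  proof (rule ccontr)
    assume "{y. \<forall>a\<in>F. a \<bullet> y \<le> \<beta> a - c} \<noteq> {}"
    then obtain y where y: "\<forall>a\<in>F. a \<bullet> y \<le> \<beta> a - c"
      by blast
    have "0 = (\<Sum>a\<in>F. \<nu> a *\<^sub>R a) \<bullet> y"
      using \<nu>(2) by simp
    also have "\<dots> = (\<Sum>a\<in>F. \<nu> a * (a \<bullet> y))"
      by (simp add: inner_sum_left)
    also have "\<dots> \<le> (\<Sum>a\<in>F. \<nu> a * (\<beta> a - c0) + \<nu> a * (c0 - c))"
      using \<nu>(1) y by (intro sum_mono) (simp add: mult_left_mono flip: distrib_left)
    also have "\<dots> = -1 + (c0 - c) * T"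
      by (simp add: sum.distrib cert T_def sum_distrib_left mult.commute)
    finally have "1 \<le> (c0 - c) * T" by simp
    moreover have "(c0 - c) * T \<le> 1 / (1 + T) * T"
      using that \<open>T \<ge> 0\<close> by (intro mult_right_mono) auto
    moreover have "1 / (1 + T) * T < 1"
      using \<open>T \<ge> 0\<close> by (simp add: field_simps)
    ultimately show False
      by linarith
  qed
  moreover have "1 / (1 + T) > 0"
    using \<open>T \<ge> 0\<close> by simp
  ultimately show ?thesis
    using that by blast
qed

definition admissible_shifts :: "(real^'n) set \<Rightarrow> real set" where
  "admissible_shifts P = {c. c \<in> \<rat> \<and> c > 0 \<and> shrink P c \<noteq> {}}"

lemma qcd_inv_eq_Sup: "qcd_inv P = Sup (admissible_shifts P)"
  unfolding qcd_inv_def admissible_shifts_def ..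

lemma core_nonempty:
  assumes "lattice_polytope P" and "admissible_shifts P \<noteq> {}"
    and "bdd_above (admissible_shifts P)"
  shows "core P \<noteq> {}"
proof
  assume "core P = {}"
  then have "{y. \<forall>a\<in>facet_normals P. a \<bullet> y \<le> supp P a - qcd_inv P} = {}"
    unfolding core_def shrink_def .
  then obtain \<delta> :: real where "\<delta> > 0"
    and empty: "\<And>c. c > qcd_inv P - \<delta> \<Longrightarrow> {y. \<forall>a\<in>facet_normals P. a \<bullet> y \<le> supp P a - c} = {}"
    using infeasible_shift_open[OF finite_facet_normals[OF assms(1)]] by blast
  obtain c where "c \<in> admissible_shifts P" and "c > qcd_inv P - \<delta>"
    using less_cSupE[of "qcd_inv P - \<delta>" "admissible_shifts P"] assms(2) \<open>\<delta> > 0\<close>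
    by (auto simp: qcd_inv_eq_Sup)
  then show False
    using empty[of c] by (auto simp: admissible_shifts_def shrink_def)
qed

text \<open>Pairing the relation with a point of the shrunk polytope bounds the shift by a weighted
  average of the support values.\<close>
lemma admissible_shifts_bdd_above:
  assumes "finite A" and "A \<subseteq> facet_normals P"
    and "\<forall>a\<in>A. l a \<ge> 0" and "\<exists>a\<in>A. l a \<noteq> 0" and "(\<Sum>a\<in>A. l a *\<^sub>R a) = 0"
  shows "bdd_above (admissible_shifts P)"
proof (rule bdd_aboveI)
  have "(\<Sum>a\<in>A. l a) > 0"
    using assms(1,3,4) by (metis order.not_eq_order_implies_strict sum_pos2)
  fix c assume "c \<in> admissible_shifts P"
  then obtain y where "y \<in> shrink P c"
    by (auto simp: admissible_shifts_def)
  then have y: "\<forall>a\<in>A. a \<bullet> y \<le> supp P a - c"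
    using assms(2) unfolding shrink_def by auto
  have "0 = (\<Sum>a\<in>A. l a *\<^sub>R a) \<bullet> y"
    using assms(5) by simp
  also have "\<dots> = (\<Sum>a\<in>A. l a * (a \<bullet> y))"
    by (simp add: inner_sum_left)
  also have "\<dots> \<le> (\<Sum>a\<in>A. l a * (supp P a - c))"
    using assms(3) y by (intro sum_mono mult_left_mono) auto
  also have "\<dots> = (\<Sum>a\<in>A. l a * supp P a) - c * (\<Sum>a\<in>A. l a)"
    by (simp add: right_diff_distrib sum_subtractf sum_distrib_left mult.commute)
  finally show "c \<le> (\<Sum>a\<in>A. l a * supp P a) / (\<Sum>a\<in>A. l a)"
    using \<open>(\<Sum>a\<in>A. l a) > 0\<close> by (simp add: pos_le_divide_eq)
qed

lemma finite_reciprocals_bounded_denominator: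
  fixes N \<epsilon> :: real
  assumes "N > 0" and "\<epsilon> > 0"
  shows "finite {1 / c | c. N * c \<in> \<int> \<and> \<epsilon> \<le> 1 / c}"
proof (rule finite_subset)
  show "{1 / c | c. N * c \<in> \<int> \<and> \<epsilon> \<le> 1 / c} \<subseteq> (\<lambda>k. N / of_int k) ` {1..\<lceil>N / \<epsilon>\<rceil>}"
  proof clarify
    fix c :: real
    assume "N * c \<in> \<int>" and "\<epsilon> \<le> 1 / c"
    then obtain k where k: "N * c = of_int k"
      by (metis Ints_cases)
    have "1 / c > 0"
      using \<open>\<epsilon> \<le> 1 / c\<close> assms(2) by linarith
    then have "c > 0"
      by simp
    then have "c \<le> 1 / \<epsilon>"
      using \<open>\<epsilon> \<le> 1 / c\<close> assms(2) by (simp add: field_simps)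
    have "(0::real) < of_int k"
      using k assms(1) \<open>c > 0\<close> by (metis mult_pos_pos)
    moreover have "of_int k \<le> N / \<epsilon>"
      using k mult_left_mono[OF \<open>c \<le> 1 / \<epsilon>\<close>, of N] assms(1) by simp
    then have "of_int k \<le> real_of_int \<lceil>N / \<epsilon>\<rceil>"
      using le_of_int_ceiling order_trans by blast
    ultimately have "k \<in> {1..\<lceil>N / \<epsilon>\<rceil>}"
      by simp
    moreover have "1 / c = N / of_int k"
      using k \<open>c > 0\<close> \<open>(0::real) < of_int k\<close> by (simp add: field_simps)
    ultimately show "1 / c \<in> (\<lambda>k. N / of_int k) ` {1..\<lceil>N / \<epsilon>\<rceil>}"
      by blast
  qed
qed simp

text \<open>If no shift is admissible, qcd P is
  the unspecified value 1 / Sup {}, which accounts for one extra element.\<close>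
theorem lemma3p9:
  fixes A :: "(real^'n) set" and \<alpha> \<epsilon> :: real
  assumes "\<alpha> > 0" and "\<epsilon> > 0"
    and "finite A" and "\<forall>a\<in>A. primitive_vec a"
    and "\<exists>l. (\<forall>a\<in>A. l a \<ge> 0) \<and> (\<exists>a\<in>A. l a \<noteq> 0) \<and> (\<Sum>a\<in>A. l a *\<^sub>R a) = 0"
  shows "finite {qcd P | P. P \<in> NN \<alpha> A \<and> qcd P \<ge> \<epsilon>}"
proof -
  have int: "\<forall>a\<in>A. integral_vec a"
    using assms(4) unfolding primitive_vec_def by blast
  then have rat: "\<forall>a\<in>A. \<forall>j. a $ j \<in> \<rat>"
    using Ints_subset_Rats unfolding integral_vec_def by blast
  obtain l where l: "\<forall>a\<in>A. l a \<ge> 0" "\<exists>a\<in>A. l a \<noteq> 0" "(\<Sum>a\<in>A. l a *\<^sub>R a) = 0"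
    using assms(5) by blast
  obtain \<mu> where \<mu>: "\<forall>a\<in>A. \<mu> a \<in> \<rat> \<and> \<mu> a \<ge> 0" "\<exists>a\<in>A. \<mu> a > 0" "(\<Sum>a\<in>A. \<mu> a *\<^sub>R a) = 0"
    using rational_nonneg_relation[OF assms(3) rat l] by blast
  obtain N where "N > 0"
    and denom: "\<And>c y b. \<forall>a\<in>A. b a \<in> \<int> \<and> a \<bullet> y = b a - c \<Longrightarrow> N * c \<in> \<int>"
    using rational_relation_denominator_bound[OF assms(3) \<mu>] by blast
  have "qcd P \<in> insert (1 / Sup {}) {1 / c | c. N * c \<in> \<int> \<and> \<epsilon> \<le> 1 / c}"
    if "P \<in> NN \<alpha> A" and "\<epsilon> \<le> qcd P" for P
  proof (cases "admissible_shifts P = {}")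
    case False
    have P: "lattice_polytope P" and A: "core_normals P = A"
      using that(1) unfolding NN_def by auto
    then have "A \<subseteq> facet_normals P"
      unfolding core_normals_def by auto
    then obtain y where "y \<in> core P"
      using core_nonempty[OF P False admissible_shifts_bdd_above[OF assms(3) _ l]] by blast
    then have "a \<bullet> y = supp P a - qcd_inv P" if "a \<in> A" for a
      using that A unfolding core_normals_def by blast
    then have "N * qcd_inv P \<in> \<int>"
      using int supp_lattice_polytope_Ints[OF P] by (intro denom[where b = "supp P" and y = y]) blast
    then show ?thesis
      using that(2) unfolding qcd_def by (intro insertI2 CollectI exI[of _ "qcd_inv P"]) simp
  qed (simp add: qcd_def qcd_inv_eq_Sup)
  then have "{qcd P | P. P \<in> NN \<alpha> A \<and> qcd P \<ge> \<epsilon>}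
      \<subseteq> insert (1 / Sup {}) {1 / c | c. N * c \<in> \<int> \<and> \<epsilon> \<le> 1 / c}"
    by blast
  then show ?thesis
    using finite_reciprocals_bounded_denominator[OF \<open>N > 0\<close> assms(2)] finite_subset by blast
qed

end
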